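(* $J=J^\epsilon\oplus J^\nu$ for some $\mathbb{F}_p[G]$-submodule $J^\nu$ of $J$, and the index $e$ vanishes on $J^\nu\cap J_{p-1}$. Moreover, for $x\in J_{p-1}$ with decomposition $x=x^\epsilon x^\nu$ ($x^\epsilon\in J^\epsilon$, $x^\nu\in J^\nu$), one has $e(x^\epsilon)=e(x)$.
   Context: $p$ odd prime. $K_0/F_0$ is a cyclic extension of degree $p$ of fields of characteristic $\neq p$; $\xi_p$ is a primitive $p$th root of unity, $F=F_0(\xi_p)$, $K=K_0(\xi_p)$, $s=[F:F_0]$ (prime to $p$), so $\mathrm{Gal}(K/F_0)\cong\mathrm{Gal}(F/F_0)\times\mathrm{Gal}(K_0/F_0)$. Let $\epsilon\in\mathrm{Gal}(K/F_0)$ fix $K_0$ and restrict to a generator of $\mathrm{Gal}(F/F_0)$, and let $\sigma\in\mathrm{Gal}(K/F_0)$ fix $F$ and restrict to a generator of $\mathrm{Gal}(K_0/F_0)$; then $G=\mathrm{Gal}(K/F)=\langle\sigma\rangle$, $\epsilon\sigma=\sigma\epsilon$, and $K=F(\sqrt[p]{a})$ for some $a\in F^\times$ chosen with $\sigma(\sqrt[p]{a})=\xi_p\sqrt[p]{a}$. Let $t\in\mathbb{Z}$ with $\epsilon(\xi_p)=\xi_p^t$. $\rho=\sigma-1$. $J=K^\times/K^{\times p}$ written multiplicatively with exponential Galois action, $J_i=\ker(\rho^i)$, and $J^\epsilon=\{x\in J: \epsilon(x)=x^t\}$ (an $\mathbb{F}_p[G]$-submodule). For $[\gamma]\in J_{p-1}$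 the index $e([\gamma])\in\mathbb{F}_p$ is defined by $\xi_p^{e([\gamma])}=\sigma(\delta)/\delta$ where $\delta\in K$ is any $p$th root of $N_{K/F}(\gamma)$. *)

theory Defs
  imports Main "HOL-Computational_Algebra.Primes"
begin

text \<open>The field K is modelled as the ambient type 'a :: field; subfields are subsets.\<close>

definition field_aut :: "('a::field \<Rightarrow> 'a) \<Rightarrow> bool" where
  "field_aut f \<longleftrightarrow> bij f \<and> (\<forall>x y. f (x + y) = f x + f y) \<and> (\<forall>x y. f (x * y) = f x * f y)"

definition is_subfield :: "'a::field set \<Rightarrow> bool" where
  "is_subfield S \<longleftrightarrow> 0 \<in> S \<and> 1 \<in> S \<and> (\<forall>x\<in>S. \<forall>y\<in>S. x + y \<in> S \<and> x - y \<in> S \<and> x * y \<in> S)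
     \<and> (\<forall>x\<in>S. x \<noteq> 0 \<longrightarrow> inverse x \<in> S)"

definition gen_field :: "'a::field set \<Rightarrow> 'a set" where
  "gen_field A = \<Inter>{S. is_subfield S \<and> A \<subseteq> S}"

text \<open>Elements of J = K^x / K^xp are represented by nonzero elements of K;
  x is trivial in J iff x is a p-th power.\<close>
definition pth_power :: "nat \<Rightarrow> 'a::field \<Rightarrow> bool" where
  "pth_power p x \<longleftrightarrow> (\<exists>w. x = w ^ p)"

text \<open>rho = sigma - 1, written multiplicatively: x \<mapsto> sigma(x)/x.\<close>
definition rho_op :: "('a::field \<Rightarrow> 'a) \<Rightarrow> 'a \<Rightarrow> 'a" where
  "rho_op \<sigma> x = \<sigma> x / x"

text \<open>J_i = ker(rho^i), as a set of representatives in K^x.\<close>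
definition J_ker :: "nat \<Rightarrow> ('a::field \<Rightarrow> 'a) \<Rightarrow> nat \<Rightarrow> 'a set" where
  "J_ker p \<sigma> i = {x. x \<noteq> 0 \<and> pth_power p ((rho_op \<sigma> ^^ i) x)}"

definition J_eps :: "nat \<Rightarrow> ('a::field \<Rightarrow> 'a) \<Rightarrow> int \<Rightarrow> 'a set" where
  "J_eps p \<epsilon> t = {x. x \<noteq> 0 \<and> pth_power p (\<epsilon> x / (x powi t))}"

definition normKF :: "nat \<Rightarrow> ('a::field \<Rightarrow> 'a) \<Rightarrow> 'a \<Rightarrow> 'a" where
  "normKF p \<sigma> \<gamma> = (\<Prod>i<p. (\<sigma> ^^ i) \<gamma>)"

text \<open>The index e([gamma]) in F_p, represented by its residue in {0..<p}:
  xi^e = sigma(delta)/delta for a p-th root delta of N(gamma).\<close>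
definition index_e :: "nat \<Rightarrow> ('a::field \<Rightarrow> 'a) \<Rightarrow> 'a \<Rightarrow> 'a \<Rightarrow> nat" where
  "index_e p \<sigma> \<xi> \<gamma> = (SOME c. c < p \<and> (\<exists>\<delta>. \<delta> ^ p = normKF p \<sigma> \<gamma> \<and> \<sigma> \<delta> = \<xi> ^ c * \<delta>))"

text \<open>An F_p[G]-submodule of J, given by its (saturated) set of representatives in K^x.\<close>
definition J_submodule :: "nat \<Rightarrow> ('a::field \<Rightarrow> 'a) \<Rightarrow> 'a set \<Rightarrow> bool" where
  "J_submodule p \<sigma> M \<longleftrightarrow> M \<subseteq> {x. x \<noteq> 0}
     \<and> (\<forall>x. x \<noteq> 0 \<longrightarrow> pth_power p x \<longrightarrow> x \<in> M)
     \<and> (\<forall>x\<in>M. \<forall>y\<in>M. x * y \<in> M)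
     \<and> (\<forall>x\<in>M. inverse x \<in> M)
     \<and> (\<forall>x\<in>M. \<sigma> x \<in> M)"

end

theory Submission
  imports Defs "HOL-Computational_Algebra.Polynomial" "HOL-Number_Theory.Cong"
begin

text \<open>Since \<open>s\<close> is prime to \<open>p\<close>, the element \<open>\<pi> = s\<^sup>-\<^sup>1 \<Sum>\<^sub>k\<^sub><\<^sub>s t\<^sup>-\<^sup>k \<epsilon>\<^sup>k\<close> of \<open>\<bbbF>\<^sub>p[\<langle>\<epsilon>\<rangle>]\<close> is an
  idempotent; on \<open>J\<close> it acts as \<open>x \<mapsto> \<Prod>\<^sub>k \<epsilon>\<^sup>k(x)\<^bsup>m a\<^sup>k\<^esup>\<close> with \<open>m s \<equiv> 1\<close> and \<open>t a \<equiv> 1 (mod p)\<close>.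
  It fixes \<open>J\<^sup>\<epsilon>\<close>, maps \<open>J\<close> onto \<open>J\<^sup>\<epsilon>\<close> and commutes with \<open>\<sigma>\<close>, so its kernel \<open>J\<^sup>\<nu>\<close> is an
  \<open>\<bbbF>\<^sub>p[G]\<close>-complement of \<open>J\<^sup>\<epsilon>\<close>.

  Modulo \<open>p\<close>, \<open>(\<sigma> - 1)\<^sup>p\<^sup>-\<^sup>1 = \<Sum>\<^sub>i (-1)\<^sup>p\<^sup>-\<^sup>1\<^sup>-\<^sup>i C(p-1,i) \<sigma>\<^sup>i \<equiv> \<Sum>\<^sub>i \<sigma>\<^sup>i\<close>, so \<open>J\<^sub>p\<^sub>-\<^sub>1\<close> consists of the classes
  whose norm is a \<open>p\<close>-th power. If \<open>\<delta>\<^sup>p = N(x)\<close> and \<open>\<sigma>(\<delta>) = \<xi>\<^sup>c \<delta>\<close>, then \<open>\<pi>\<close> applied to \<open>\<delta>\<close>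
  is a \<open>p\<close>-th root of \<open>N(\<pi> x)\<close> on which \<open>\<sigma>\<close> acts by \<open>\<pi>(\<xi>)\<^sup>c = \<xi>\<^sup>c\<close>, because \<open>\<epsilon>\<^sup>k(\<xi>) = \<xi>\<^bsup>t\<^sup>k\<^esup>\<close>.
  Hence \<open>\<pi>\<close> preserves the index, which gives \<open>e(x\<^sup>\<epsilon>) = e(x)\<close>, and \<open>e = 0\<close> on
  \<open>J\<^sup>\<nu> \<inter> J\<^sub>p\<^sub>-\<^sub>1\<close>, where \<open>\<pi> x\<close> is trivial.\<close>

lemma field_aut_add: "field_aut f \<Longrightarrow> f (x + y) = f x + f y"
  by (simp add: field_aut_def)

lemma field_aut_mult: "field_aut f \<Longrightarrow> f (x * y) = f x * f y"
  by (simp add: field_aut_def)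

lemma field_aut_0: "field_aut f \<Longrightarrow> f 0 = 0"
  using field_aut_add[of f 0 0] by (metis add.right_neutral add_left_cancel)

lemma field_aut_eq_0_iff: "field_aut f \<Longrightarrow> f x = 0 \<longleftrightarrow> x = 0"
  by (metis field_aut_def field_aut_0 bij_def injD)

lemma field_aut_1: "field_aut (f :: 'a::field \<Rightarrow> 'a) \<Longrightarrow> f 1 = 1"
  using field_aut_mult[of f 1 1] field_aut_eq_0_iff[of f 1] by (metis mult_cancel_left1 one_neq_zero)

lemma field_aut_inverse: "field_aut (f :: 'a::field \<Rightarrow> 'a) \<Longrightarrow> f (inverse x) = inverse (f x)"
  by (metis field_aut_0 field_aut_1 field_aut_mult inverse_unique inverse_zero right_inverse)

lemma field_aut_divide: "field_aut (f :: 'a::field \<Rightarrow> 'a) \<Longrightarrow> f (x / y) = f x / f y"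
  by (simp add: divide_inverse field_aut_mult field_aut_inverse)

lemma field_aut_power: "field_aut (f :: 'a::field \<Rightarrow> 'a) \<Longrightarrow> f (x ^ n) = f x ^ n"
  by (induction n) (simp_all add: field_aut_1 field_aut_mult)

lemma field_aut_power_int: "field_aut (f :: 'a::field \<Rightarrow> 'a) \<Longrightarrow> f (x powi k) = f x powi k"
  by (simp add: power_int_def field_aut_power field_aut_inverse)

lemma field_aut_prod: "field_aut (f :: 'a::field \<Rightarrow> 'a) \<Longrightarrow> f (prod g A) = (\<Prod>i\<in>A. f (g i))"
  by (induction A rule: infinite_finite_induct) (simp_all add: field_aut_1 field_aut_mult)

lemma field_aut_funpow: "field_aut f \<Longrightarrow> field_aut (f ^^ n)"
  by (induction n) (auto simp: field_aut_def bij_comp)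

lemma funpow_commute: "f \<circ> g = g \<circ> f \<Longrightarrow> (f ^^ m) ((g ^^ n) x) = (g ^^ n) ((f ^^ m) x)"
proof -
  assume commute: "f \<circ> g = g \<circ> f"
  have "f ((g ^^ n) y) = (g ^^ n) (f y)" for y
    by (induction n) (simp_all, metis commute comp_apply)
  then show ?thesis by (induction m) simp_all
qed

lemma power_int_prod: "(prod f A) powi n = (\<Prod>i\<in>A. f i powi n)" for f :: "_ \<Rightarrow> 'a::field"
  by (induction A rule: infinite_finite_induct) (simp_all add: power_int_mult_distrib)

lemma prod_power_int_sum: "(x::'a::field) \<noteq> 0 \<Longrightarrow> (\<Prod>i\<in>A. x powi f i) = x powi (sum f A)"
  by (induction A rule: infinite_finite_induct) (simp_all add: power_int_add)

lemma pth_power_power: "pth_power p (w ^ p)"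
  by (auto simp: pth_power_def)

lemma pth_power_1: "pth_power p 1"
  using pth_power_power[of p 1] by simp

lemma pth_power_mult: "pth_power p x \<Longrightarrow> pth_power p y \<Longrightarrow> pth_power p (x * y)"
  by (auto simp: pth_power_def power_mult_distrib[symmetric])

lemma pth_power_inverse: "pth_power p (x::'a::field) \<Longrightarrow> pth_power p (inverse x)"
  by (auto simp: pth_power_def power_inverse[symmetric])

lemma pth_power_power_int: "pth_power p (x::'a::field) \<Longrightarrow> pth_power p (x powi k)"
proof -
  assume "pth_power p x"
  then obtain w where w: "x = w ^ p"
    by (auto simp: pth_power_def)
  have "x powi k = (w powi k) ^ p"
    unfolding w power_int_power power_int_power' by (simp add: mult.commute)
  then show ?thesis
    by (auto simp: pth_power_def)
qed

lemma pth_power_power_int_dvd: "int p dvd k \<Longrightarrow> pth_power p ((x::'a::field) powi k)"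
proof -
  assume "int p dvd k"
  then obtain j where "k = int p * j"
    by (auto simp: dvd_def)
  then have "x powi k = (x ^ p) powi j"
    by (simp add: power_int_mult)
  then show ?thesis
    by (simp add: pth_power_power pth_power_power_int)
qed

lemma pth_power_field_aut: "field_aut (f::'a::field \<Rightarrow> 'a) \<Longrightarrow> pth_power p x \<Longrightarrow> pth_power p (f x)"
  by (auto simp: pth_power_def field_aut_power)

lemma pth_power_prod: "(\<And>i. i \<in> A \<Longrightarrow> pth_power p (g i)) \<Longrightarrow> pth_power p (prod g A)"
  by (induction A rule: infinite_finite_induct) (simp_all add: pth_power_1 pth_power_mult)

text \<open>Equality of classes in \<open>J = K\<^sup>\<times>/K\<^sup>\<times>\<^sup>p\<close>.\<close>
definition pth_cong :: "nat \<Rightarrow> 'a::field \<Rightarrow> 'a \<Rightarrow> bool" where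
  "pth_cong p x y \<longleftrightarrow> x \<noteq> 0 \<and> y \<noteq> 0 \<and> pth_power p (x / y)"

lemma pth_cong_refl: "x \<noteq> 0 \<Longrightarrow> pth_cong p x x"
  by (simp add: pth_cong_def pth_power_1)

lemma pth_cong_sym: "pth_cong p x y \<Longrightarrow> pth_cong p y x"
  by (auto simp: pth_cong_def dest: pth_power_inverse)

lemma pth_cong_trans: "pth_cong p x y \<Longrightarrow> pth_cong p y z \<Longrightarrow> pth_cong p x z"
proof -
  assume xy: "pth_cong p x y" and yz: "pth_cong p y z"
  then have "x / z = (x / y) * (y / z)"
    by (simp add: pth_cong_def)
  then show ?thesis
    using xy yz unfolding pth_cong_def by (metis pth_power_mult)
qed

lemma pth_cong_mult: "pth_cong p x y \<Longrightarrow> pth_cong p x' y' \<Longrightarrow> pth_cong p (x * x') (y * y')"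
  by (auto simp: pth_cong_def dest: pth_power_mult)

lemma pth_cong_power_int: "pth_cong p x y \<Longrightarrow> pth_cong p (x powi k) (y powi k)"
  by (auto simp: pth_cong_def power_int_divide_distrib[symmetric] pth_power_power_int)

lemma pth_cong_field_aut: "field_aut f \<Longrightarrow> pth_cong p x y \<Longrightarrow> pth_cong p (f x) (f y)"
  by (auto simp: pth_cong_def field_aut_eq_0_iff field_aut_divide[symmetric] pth_power_field_aut)

lemma pth_cong_prod: "(\<And>i. i \<in> A \<Longrightarrow> pth_cong p (g i) (h i)) \<Longrightarrow> pth_cong p (prod g A) (prod h A)"
  by (induction A rule: infinite_finite_induct) (simp_all add: pth_cong_refl pth_cong_mult)

lemma pth_cong_power_int_exponent:
  "(x::'a::field) \<noteq> 0 \<Longrightarrow> [a = b] (mod int p) \<Longrightarrow> pth_cong p (x powi a) (x powi b)"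
  by (simp add: pth_cong_def power_int_diff[symmetric] pth_power_power_int_dvd
      cong_iff_dvd_diff dvd_diff_commute)

lemma pth_cong_pth_power: "pth_cong p x y \<Longrightarrow> pth_power p y \<Longrightarrow> pth_power p x"
  unfolding pth_cong_def by (metis nonzero_eq_divide_eq pth_power_mult)

lemma binomial_prime_minus_one_cong:
  assumes "prime p" "i < p"
  shows "[int (p - 1 choose i) = (-1) ^ i] (mod int p)"
  using assms(2)
proof (induction i)
  case 0
  then show ?case by simp
next
  case (Suc i)
  have p: "p = Suc (p - 1)"
    using prime_gt_0_nat[OF assms(1)] by simp
  have "p choose Suc i = (p - 1 choose i) + (p - 1 choose Suc i)"
    by (subst p) simp
  moreover have "p dvd (p choose Suc i)"
    using dvd_choose_prime[OF Suc.prems _ _ assms(1)] p by simp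
  ultimately have "[int (p - 1 choose Suc i) = - int (p - 1 choose i)] (mod int p)"
    by (simp add: cong_iff_dvd_diff add.commute flip: of_nat_add of_nat_dvd_iff)
  moreover have "[- int (p - 1 choose i) = - ((-1) ^ i)] (mod int p)"
    using Suc by (simp add: cong_minus_minus_iff)
  ultimately show ?case by (auto elim: cong_trans)
qed

locale primitive_root_of_unity =
  fixes p :: nat and \<xi> :: "'a::field"
  assumes prime: "prime p" and root: "\<xi> ^ p = 1" and nontrivial: "\<xi> \<noteq> 1"
begin

lemma p_pos: "p > 0"
  using prime prime_gt_0_nat by blast

lemma nonzero: "\<xi> \<noteq> 0"
  using root p_pos by (metis zero_power zero_neq_one)

lemma power_mod: "\<xi> ^ n = \<xi> ^ (n mod p)"
proof -
  have "\<xi> ^ n = (\<xi> ^ p) ^ (n div p) * \<xi> ^ (n mod p)"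
    by (metis mult_div_mod_eq power_add power_mult)
  then show ?thesis
    by (simp add: root)
qed

lemma power_eq_1_iff: "\<xi> ^ n = 1 \<longleftrightarrow> p dvd n"
proof
  assume n: "\<xi> ^ n = 1"
  show "p dvd n"
  proof (rule ccontr)
    assume "\<not> p dvd n"
    then have "coprime n p"
      using prime by (metis coprime_commute prime_imp_coprime)
    then obtain u where u: "[n * u = 1] (mod p)"
      using cong_solve_coprime_nat by auto
    have "\<xi> = \<xi> ^ ((n * u) mod p)"
      using u prime_gt_1_nat[OF prime] by (simp add: cong_def)
    also have "\<dots> = (\<xi> ^ n) ^ u"
      by (simp flip: power_mod power_mult)
    finally show False
      using n nontrivial by simp
  qed
next
  assume "p dvd n"
  then show "\<xi> ^ n = 1"
    using root by (auto simp: power_mult)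
qed

lemma power_inj:
  assumes "i < p" "j < p" "\<xi> ^ i = \<xi> ^ j"
  shows "i = j"
proof -
  have "i = j" if ij: "i \<le> j" "j < p" "\<xi> ^ i = \<xi> ^ j" for i j
  proof -
    have "\<xi> ^ i * \<xi> ^ (j - i) = \<xi> ^ i * 1"
      using ij(1,3) by (metis le_add_diff_inverse mult_1_right power_add)
    then have "p dvd (j - i)"
      using nonzero power_eq_1_iff by simp
    then have "j - i = 0"
      using ij(2) by (meson dvd_imp_le diff_le_self le_trans not_le neq0_conv)
    then show "i = j"
      using ij(1) by simp
  qed
  then show ?thesis
    using assms by (metis nat_le_linear)
qed

lemma power_int_eq_1_iff: "\<xi> powi n = 1 \<longleftrightarrow> int p dvd n"
proof -
  have r: "0 \<le> n mod int p" "nat (n mod int p) < p"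
    using p_pos by (auto simp: nat_less_iff)
  have "\<xi> powi n = (\<xi> ^ p) powi (n div int p) * \<xi> powi (n mod int p)"
    using nonzero by (metis mult_div_mod_eq power_int_add power_int_mult power_int_of_nat)
  then have "\<xi> powi n = \<xi> ^ nat (n mod int p)"
    using root r by (simp add: power_int_def)
  then have "\<xi> powi n = 1 \<longleftrightarrow> p dvd nat (n mod int p)"
    by (simp add: power_eq_1_iff)
  also have "\<dots> \<longleftrightarrow> nat (n mod int p) = 0"
    using r(2) by (auto dest: dvd_imp_le)
  also have "\<dots> \<longleftrightarrow> int p dvd n"
    using r(1) by (simp add: dvd_eq_mod_eq_0)
  finally show ?thesis .
qed

lemma power_int_eq_iff: "\<xi> powi x = \<xi> powi y \<longleftrightarrow> [x = y] (mod int p)"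
  using nonzero power_int_eq_1_iff[of "x - y"]
  by (simp add: power_int_diff cong_iff_dvd_diff)

lemma root_of_unity_eq_power:
  assumes "\<zeta> ^ p = 1"
  shows "\<exists>j<p. \<zeta> = \<xi> ^ j"
proof -
  define Q :: "'a poly" where "Q = monom 1 p - 1"
  have roots: "{x. poly Q x = 0} = {x. x ^ p = 1}"
    by (simp add: Q_def poly_monom)
  have "poly Q 0 \<noteq> 0"
    using p_pos by (simp add: Q_def poly_monom power_0_left)
  then have "Q \<noteq> 0"
    by auto
  moreover have "degree Q \<le> p"
    unfolding Q_def by (intro degree_diff_le) (simp_all add: degree_monom_eq)
  ultimately have "finite {x::'a. x ^ p = 1}" and "card {x::'a. x ^ p = 1} \<le> p"
    using roots poly_roots_finite[of Q] card_poly_roots_bound[of Q] by auto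
  moreover have powers: "(\<lambda>j. \<xi> ^ j) ` {..<p} \<subseteq> {x. x ^ p = 1}"
    by (auto simp: power_eq_1_iff simp flip: power_mult)
  moreover have "card ((\<lambda>j. \<xi> ^ j) ` {..<p}) = p"
    by (simp add: card_image inj_on_def power_inj)
  ultimately have "(\<lambda>j. \<xi> ^ j) ` {..<p} = {x. x ^ p = 1}"
    by (metis card_subset_eq card_mono le_antisym)
  then show ?thesis
    using assms by auto
qed

end

locale kummer_setting = primitive_root_of_unity p \<xi>
  for p :: nat and \<xi> :: "'a::field" +
  fixes \<sigma> \<epsilon> :: "'a \<Rightarrow> 'a" and t :: int and s :: nat
  assumes odd: "odd p"
    and aut_\<sigma>: "field_aut \<sigma>" and aut_\<epsilon>: "field_aut \<epsilon>"
    and \<sigma>_order: "\<sigma> ^^ p = id" and s_pos: "s > 0" and \<epsilon>_order: "\<epsilon> ^^ s = id"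
    and commute: "\<epsilon> \<circ> \<sigma> = \<sigma> \<circ> \<epsilon>"
    and \<sigma>_\<xi>: "\<sigma> \<xi> = \<xi>" and \<epsilon>_\<xi>: "\<epsilon> \<xi> = \<xi> powi t"
begin

lemma aut_\<sigma>_funpow: "field_aut (\<sigma> ^^ i)"
  by (rule field_aut_funpow[OF aut_\<sigma>])

lemma aut_\<epsilon>_funpow: "field_aut (\<epsilon> ^^ i)"
  by (rule field_aut_funpow[OF aut_\<epsilon>])

lemma \<epsilon>_funpow_\<xi>: "(\<epsilon> ^^ k) \<xi> = \<xi> powi (t ^ k)"
  by (induction k) (simp_all add: field_aut_power_int[OF aut_\<epsilon>] \<epsilon>_\<xi> power_int_mult mult.commute)

lemma t_power_s_cong: "[t ^ s = 1] (mod int p)"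
  using \<epsilon>_funpow_\<xi>[of s] \<epsilon>_order by (simp flip: power_int_eq_iff)

subsection \<open>The norm\<close>

lemma normKF_nonzero: "x \<noteq> 0 \<Longrightarrow> normKF p \<sigma> x \<noteq> 0"
  by (simp add: normKF_def field_aut_eq_0_iff[OF aut_\<sigma>_funpow])

lemma normKF_mult: "normKF p \<sigma> (x * y) = normKF p \<sigma> x * normKF p \<sigma> y"
  by (simp add: normKF_def field_aut_mult[OF aut_\<sigma>_funpow] prod.distrib)

lemma normKF_power: "normKF p \<sigma> (x ^ n) = normKF p \<sigma> x ^ n"
  by (simp add: normKF_def field_aut_power[OF aut_\<sigma>_funpow] prod_power_distrib)

lemma normKF_power_int: "normKF p \<sigma> (x powi k) = normKF p \<sigma> x powi k"
  by (simp add: normKF_def field_aut_power_int[OF aut_\<sigma>_funpow] power_int_prod)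

lemma normKF_divide: "normKF p \<sigma> (x / y) = normKF p \<sigma> x / normKF p \<sigma> y"
  by (simp add: normKF_def field_aut_divide[OF aut_\<sigma>_funpow] prod_dividef)

lemma normKF_pth_cong: "pth_cong p x y \<Longrightarrow> pth_cong p (normKF p \<sigma> x) (normKF p \<sigma> y)"
  by (auto simp: pth_cong_def pth_power_def normKF_nonzero normKF_power simp flip: normKF_divide)

lemma normKF_prod: "normKF p \<sigma> (prod g A) = (\<Prod>k\<in>A. normKF p \<sigma> (g k))"
  by (simp add: normKF_def field_aut_prod[OF aut_\<sigma>_funpow] prod.swap[of _ A])

lemma normKF_\<epsilon>_funpow: "normKF p \<sigma> ((\<epsilon> ^^ k) x) = (\<epsilon> ^^ k) (normKF p \<sigma> x)"
  by (simp add: normKF_def field_aut_prod[OF aut_\<epsilon>_funpow] funpow_commute[OF commute])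

lemma \<sigma>_normKF: "\<sigma> (normKF p \<sigma> x) = normKF p \<sigma> x"
proof -
  obtain q where q: "p = Suc q"
    using p_pos gr0_implies_Suc by blast
  have "\<sigma> (normKF p \<sigma> x) = (\<Prod>i<p. (\<sigma> ^^ Suc i) x)"
    by (simp add: normKF_def field_aut_prod[OF aut_\<sigma>])
  also have "\<dots> = (\<Prod>i<q. (\<sigma> ^^ Suc i) x) * x"
    using \<sigma>_order q by (simp del: funpow.simps)
  also have "\<dots> = normKF p \<sigma> x"
    unfolding normKF_def q prod.lessThan_Suc_shift by (simp del: funpow.simps add: mult.commute)
  finally show ?thesis .
qed

subsection \<open>The kernel of \<open>\<rho>\<^sup>p\<^sup>-\<^sup>1\<close>\<close>

definition group_ring_power :: "(nat \<Rightarrow> int) \<Rightarrow> 'a \<Rightarrow> 'a" where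
  "group_ring_power f x = (\<Prod>i<p. (\<sigma> ^^ i) x powi f i)"

text \<open>The coefficient of \<open>\<sigma>\<^sup>i\<close> in \<open>(\<sigma> - 1)\<^sup>n\<close>.\<close>
definition rho_power_coeff :: "nat \<Rightarrow> nat \<Rightarrow> int" where
  "rho_power_coeff n i = (-1) ^ (n - i) * int (n choose i)"

lemma group_ring_power_nonzero: "x \<noteq> 0 \<Longrightarrow> group_ring_power f x \<noteq> 0"
  by (simp add: group_ring_power_def field_aut_eq_0_iff[OF aut_\<sigma>_funpow])

lemma group_ring_power_divide:
  "x \<noteq> 0 \<Longrightarrow> group_ring_power f x / group_ring_power g x = group_ring_power (\<lambda>i. f i - g i) x"
  unfolding group_ring_power_def prod_dividef[symmetric]
  by (intro prod.cong refl) (simp add: power_int_diff field_aut_eq_0_iff[OF aut_\<sigma>_funpow])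

lemma \<sigma>_group_ring_power:
  assumes "f (p - 1) = 0"
  shows "\<sigma> (group_ring_power f x) = group_ring_power (\<lambda>i. if i = 0 then 0 else f (i - 1)) x"
proof -
  obtain q where q: "p = Suc q"
    using p_pos gr0_implies_Suc by blast
  have "\<sigma> (group_ring_power f x) = (\<Prod>i<p. (\<sigma> ^^ Suc i) x powi f i)"
    by (simp add: group_ring_power_def field_aut_prod[OF aut_\<sigma>] field_aut_power_int[OF aut_\<sigma>])
  also have "\<dots> = (\<Prod>i<q. (\<sigma> ^^ Suc i) x powi f i)"
    using assms q by (simp del: funpow.simps)
  also have "\<dots> = group_ring_power (\<lambda>i. if i = 0 then 0 else f (i - 1)) x"
    unfolding group_ring_power_def unfolding q prod.lessThan_Suc_shift by (simp del: funpow.simps)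
  finally show ?thesis .
qed

lemma rho_power_coeff_Suc:
  "(if i = 0 then 0 else rho_power_coeff n (i - 1)) - rho_power_coeff n i = rho_power_coeff (Suc n) i"
proof (cases i)
  case (Suc j)
  show ?thesis
  proof (cases "j < n")
    case True
    then have "n - j = Suc (n - Suc j)"
      by simp
    then show ?thesis
      using Suc by (simp add: rho_power_coeff_def algebra_simps)
  qed (use Suc in \<open>simp add: rho_power_coeff_def\<close>)
qed (simp add: rho_power_coeff_def)

lemma rho_funpow_eq_group_ring_power:
  "n < p \<Longrightarrow> x \<noteq> 0 \<Longrightarrow> (rho_op \<sigma> ^^ n) x = group_ring_power (rho_power_coeff n) x"
proof (induction n)
  case 0
  obtain q where q: "p = Suc q"
    using p_pos gr0_implies_Suc by blast
  have "group_ring_power (rho_power_coeff 0) x = x"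
    unfolding group_ring_power_def unfolding q prod.lessThan_Suc_shift by (simp add: rho_power_coeff_def)
  then show ?case
    by simp
next
  case (Suc n)
  have "rho_power_coeff n (p - 1) = 0"
    using Suc.prems by (simp add: rho_power_coeff_def)
  then show ?case
    using Suc by (simp add: rho_op_def \<sigma>_group_ring_power group_ring_power_divide rho_power_coeff_Suc)
qed

lemma rho_power_coeff_cong: "i < p \<Longrightarrow> [rho_power_coeff (p - 1) i = 1] (mod int p)"
proof -
  assume i: "i < p"
  have "[rho_power_coeff (p - 1) i = (-1) ^ (p - 1 - i) * (-1) ^ i] (mod int p)"
    unfolding rho_power_coeff_def by (intro cong_scalar_left binomial_prime_minus_one_cong prime i)
  moreover have "(-1 :: int) ^ (p - 1 - i) * (-1) ^ i = (-1) ^ (p - 1)"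
    using i by (simp flip: power_add)
  moreover have "even (p - 1)"
    using odd p_pos by simp
  ultimately show ?thesis
    by simp
qed

text \<open>Modulo \<open>p\<close> the binomial expansion of \<open>(\<sigma> - 1)\<^sup>p\<^sup>-\<^sup>1\<close> is \<open>\<Sum>\<^sub>i \<sigma>\<^sup>i\<close>, the norm.\<close>
lemma rho_funpow_pth_cong_normKF: "x \<noteq> 0 \<Longrightarrow> pth_cong p ((rho_op \<sigma> ^^ (p - 1)) x) (normKF p \<sigma> x)"
proof -
  assume x: "x \<noteq> 0"
  have "normKF p \<sigma> x = group_ring_power (\<lambda>_. 1) x"
    by (simp add: group_ring_power_def normKF_def)
  moreover have "pth_power p (group_ring_power (\<lambda>i. rho_power_coeff (p - 1) i - 1) x)"
    unfolding group_ring_power_def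
    by (intro pth_power_prod pth_power_power_int_dvd)
      (use rho_power_coeff_cong in \<open>auto simp: cong_iff_dvd_diff\<close>)
  ultimately show ?thesis
    using x p_pos by (simp add: pth_cong_def rho_funpow_eq_group_ring_power
        group_ring_power_nonzero group_ring_power_divide)
qed

lemma J_ker_iff: "x \<in> J_ker p \<sigma> (p - 1) \<longleftrightarrow> x \<noteq> 0 \<and> pth_power p (normKF p \<sigma> x)"
  using rho_funpow_pth_cong_normKF pth_cong_pth_power pth_cong_sym unfolding J_ker_def by blast

subsection \<open>The index\<close>

definition has_index :: "'a \<Rightarrow> nat \<Rightarrow> bool" where
  "has_index y c \<longleftrightarrow> c < p \<and> (\<exists>\<delta>. \<delta> ^ p = normKF p \<sigma> y \<and> \<sigma> \<delta> = \<xi> ^ c * \<delta>)"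

text \<open>Two \<open>p\<close>-th roots of the norm differ by a power of \<open>\<xi>\<close>, which \<open>\<sigma>\<close> fixes.\<close>
lemma has_index_unique:
  assumes "y \<noteq> 0" "has_index y c" "has_index y c'"
  shows "c = c'"
proof -
  obtain \<delta> \<delta>' where c: "c < p" "\<delta> ^ p = normKF p \<sigma> y" "\<sigma> \<delta> = \<xi> ^ c * \<delta>"
    and c': "c' < p" "\<delta>' ^ p = normKF p \<sigma> y" "\<sigma> \<delta>' = \<xi> ^ c' * \<delta>'"
    using assms(2,3) by (auto simp: has_index_def)
  have \<delta>: "\<delta> \<noteq> 0"
    using c(2) normKF_nonzero[OF assms(1)] p_pos by (metis zero_power)
  then have "(\<delta>' / \<delta>) ^ p = 1"
    using c(2) c'(2) normKF_nonzero[OF assms(1)] by (simp add: power_divide)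
  then obtain j where j: "\<delta>' = \<xi> ^ j * \<delta>"
    using root_of_unity_eq_power \<delta> by (metis nonzero_eq_divide_eq)
  have "\<xi> ^ c' * (\<xi> ^ j * \<delta>) = \<sigma> (\<xi> ^ j * \<delta>)"
    using c'(3) j by simp
  also have "\<dots> = \<xi> ^ c * (\<xi> ^ j * \<delta>)"
    using c(3) by (simp add: field_aut_mult[OF aut_\<sigma>] field_aut_power[OF aut_\<sigma>] \<sigma>_\<xi> ac_simps)
  finally have "\<xi> ^ c' = \<xi> ^ c"
    using \<delta> nonzero by simp
  then show ?thesis
    using power_inj c(1) c'(1) by simp
qed

lemma index_e_eqI:
  assumes "y \<noteq> 0" "has_index y c"
  shows "index_e p \<sigma> \<xi> y = c"
proof -
  have "has_index y (index_e p \<sigma> \<xi> y)"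
    using assms(2) unfolding index_e_def has_index_def by (rule someI_ex[OF exI])
  then show ?thesis
    using has_index_unique assms by blast
qed

lemma has_index_exists: "pth_power p (normKF p \<sigma> y) \<Longrightarrow> \<exists>c. has_index y c"
proof -
  assume "pth_power p (normKF p \<sigma> y)"
  then obtain w where w: "normKF p \<sigma> y = w ^ p"
    by (auto simp: pth_power_def)
  show ?thesis
  proof (cases "w = 0")
    case True
    then show ?thesis
      using w p_pos by (auto simp: has_index_def field_aut_0[OF aut_\<sigma>] intro!: exI[of _ 0])
  next
    case False
    have "(\<sigma> w / w) ^ p = 1"
      using \<sigma>_normKF[of y] w False by (simp add: field_aut_power[OF aut_\<sigma>] power_divide)
    then obtain j where "j < p" "\<sigma> w = \<xi> ^ j * w"
      using root_of_unity_eq_power False by (metis nonzero_eq_divide_eq)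
    then show ?thesis
      using w by (auto simp: has_index_def)
  qed
qed

lemma has_index_pth_cong:
  assumes "pth_cong p y x" "has_index x c"
  shows "has_index y c"
proof -
  obtain \<delta> where c: "c < p" "\<delta> ^ p = normKF p \<sigma> x" "\<sigma> \<delta> = \<xi> ^ c * \<delta>"
    using assms(2) by (auto simp: has_index_def)
  obtain r where "y / x = r ^ p"
    using assms(1) by (auto simp: pth_cong_def pth_power_def)
  then have "y = x * r ^ p"
    using assms(1) by (simp add: pth_cong_def field_simps)
  then have "(\<delta> * normKF p \<sigma> r) ^ p = normKF p \<sigma> y"
    by (simp add: normKF_mult normKF_power c(2) power_mult_distrib)
  moreover have "\<sigma> (\<delta> * normKF p \<sigma> r) = \<xi> ^ c * (\<delta> * normKF p \<sigma> r)"
    by (simp add: field_aut_mult[OF aut_\<sigma>] \<sigma>_normKF c(3))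
  ultimately show ?thesis
    using c(1) by (auto simp: has_index_def)
qed

lemma has_index_pth_power: "pth_power p y \<Longrightarrow> has_index y 0"
  using p_pos by (auto simp: has_index_def pth_power_def normKF_power \<sigma>_normKF)

end

locale eps_projection = kummer_setting +
  fixes m a :: int
  assumes m_s_cong: "[m * int s = 1] (mod int p)" and t_a_cong: "[t * a = 1] (mod int p)"
begin

definition proj_eps :: "'a \<Rightarrow> 'a" where
  "proj_eps x = (\<Prod>k<s. (\<epsilon> ^^ k) x powi (m * a ^ k))"

lemma proj_eps_nonzero: "x \<noteq> 0 \<Longrightarrow> proj_eps x \<noteq> 0"
  by (simp add: proj_eps_def field_aut_eq_0_iff[OF aut_\<epsilon>_funpow])

lemma proj_eps_mult: "proj_eps (x * y) = proj_eps x * proj_eps y"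
  by (simp add: proj_eps_def field_aut_mult[OF aut_\<epsilon>_funpow] power_int_mult_distrib prod.distrib)

lemma proj_eps_power: "proj_eps (x ^ n) = proj_eps x ^ n"
  by (simp add: proj_eps_def field_aut_power[OF aut_\<epsilon>_funpow] prod_power_distrib
      power_int_power' power_int_power mult.commute)

lemma proj_eps_divide: "proj_eps (x / y) = proj_eps x / proj_eps y"
  by (simp add: proj_eps_def field_aut_divide[OF aut_\<epsilon>_funpow] power_int_divide_distrib prod_dividef)

lemma proj_eps_inverse: "proj_eps (inverse x) = inverse (proj_eps x)"
  using proj_eps_divide[of 1 x] by (simp add: proj_eps_def field_aut_1[OF aut_\<epsilon>_funpow] inverse_eq_divide)

lemma proj_eps_pth_power: "pth_power p y \<Longrightarrow> pth_power p (proj_eps y)"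
  by (auto simp: pth_power_def proj_eps_power)

lemma \<sigma>_proj_eps: "\<sigma> (proj_eps x) = proj_eps (\<sigma> x)"
  using funpow_commute[OF commute, of _ 1]
  by (simp add: proj_eps_def field_aut_prod[OF aut_\<sigma>] field_aut_power_int[OF aut_\<sigma>])

lemma normKF_proj_eps: "normKF p \<sigma> (proj_eps x) = proj_eps (normKF p \<sigma> x)"
  by (simp add: proj_eps_def normKF_prod normKF_power_int normKF_\<epsilon>_funpow)

lemma exponent_sum_cong: "[(\<Sum>k<s. t ^ k * (m * a ^ k)) = 1] (mod int p)"
proof -
  have "[(\<Sum>k<s. t ^ k * (m * a ^ k)) = (\<Sum>k<s. m * 1 ^ k)] (mod int p)"
  proof (rule cong_sum)
    fix k
    have "[m * (t * a) ^ k = m * 1 ^ k] (mod int p)"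
      by (intro cong_scalar_left cong_pow t_a_cong)
    then show "[t ^ k * (m * a ^ k) = m * 1 ^ k] (mod int p)"
      by (simp add: power_mult_distrib algebra_simps)
  qed
  then show ?thesis
    using m_s_cong by (simp add: mult.commute cong_trans)
qed

lemma proj_eps_\<xi>: "proj_eps \<xi> = \<xi>"
proof -
  have "proj_eps \<xi> = \<xi> powi (\<Sum>k<s. t ^ k * (m * a ^ k))"
    by (simp add: proj_eps_def \<epsilon>_funpow_\<xi> prod_power_int_sum[OF nonzero] flip: power_int_mult)
  also have "\<dots> = \<xi> powi 1"
    using exponent_sum_cong by (simp only: power_int_eq_iff)
  finally show ?thesis
    by simp
qed

lemma has_index_proj_eps:
  assumes "has_index x c"
  shows "has_index (proj_eps x) c"
proof -
  obtain \<delta> where c: "c < p" "\<delta> ^ p = normKF p \<sigma> x" "\<sigma> \<delta> = \<xi> ^ c * \<delta>"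
    using assms by (auto simp: has_index_def)
  have "proj_eps \<delta> ^ p = normKF p \<sigma> (proj_eps x)"
    by (simp add: normKF_proj_eps c(2) flip: proj_eps_power)
  moreover have "\<sigma> (proj_eps \<delta>) = \<xi> ^ c * proj_eps \<delta>"
    by (simp add: \<sigma>_proj_eps c(3) proj_eps_mult proj_eps_power proj_eps_\<xi>)
  ultimately show ?thesis
    using c(1) by (auto simp: has_index_def)
qed

lemma J_eps_\<epsilon>_funpow: "u \<in> J_eps p \<epsilon> t \<Longrightarrow> pth_cong p ((\<epsilon> ^^ k) u) (u powi (t ^ k))"
proof (induction k)
  case 0
  then show ?case
    by (simp add: J_eps_def pth_cong_refl)
next
  case (Suc k)
  have "pth_cong p (\<epsilon> ((\<epsilon> ^^ k) u)) (\<epsilon> u powi (t ^ k))"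
    using pth_cong_field_aut[OF aut_\<epsilon> Suc.IH[OF Suc.prems]] by (simp add: field_aut_power_int[OF aut_\<epsilon>])
  moreover have "pth_cong p (\<epsilon> u powi (t ^ k)) ((u powi t) powi (t ^ k))"
    using Suc.prems by (intro pth_cong_power_int) (simp add: J_eps_def pth_cong_def field_aut_eq_0_iff[OF aut_\<epsilon>])
  ultimately have "pth_cong p (\<epsilon> ((\<epsilon> ^^ k) u)) ((u powi t) powi (t ^ k))"
    by (rule pth_cong_trans)
  then show ?case
    by (simp flip: power_int_mult)
qed

lemma proj_eps_J_eps: "u \<in> J_eps p \<epsilon> t \<Longrightarrow> pth_cong p (proj_eps u) u"
proof -
  assume u: "u \<in> J_eps p \<epsilon> t"
  then have "u \<noteq> 0"
    by (simp add: J_eps_def)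
  have "pth_cong p (proj_eps u) (\<Prod>k<s. (u powi (t ^ k)) powi (m * a ^ k))"
    unfolding proj_eps_def by (intro pth_cong_prod pth_cong_power_int J_eps_\<epsilon>_funpow u)
  also have "(\<Prod>k<s. (u powi (t ^ k)) powi (m * a ^ k)) = u powi (\<Sum>k<s. t ^ k * (m * a ^ k))"
    by (simp add: prod_power_int_sum[OF \<open>u \<noteq> 0\<close>] flip: power_int_mult)
  finally show ?thesis
    using pth_cong_trans[OF _ pth_cong_power_int_exponent[OF \<open>u \<noteq> 0\<close> exponent_sum_cong]] by simp
qed

lemma a_power_cong: "[a ^ (s - 1) = t] (mod int p)"
proof -
  have "t ^ s = t ^ (s - 1) * t"
    using s_pos by (metis Suc_diff_1 power_Suc2)
  then have "a ^ (s - 1) * t ^ s = (t * a) ^ (s - 1) * t"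
    by (simp add: power_mult_distrib ac_simps)
  then have "[a ^ (s - 1) * t ^ s = t] (mod int p)"
    using cong_scalar_right[OF cong_pow[OF t_a_cong]] by simp
  moreover have "[a ^ (s - 1) * t ^ s = a ^ (s - 1)] (mod int p)"
    using cong_scalar_left[OF t_power_s_cong] by simp
  ultimately show ?thesis
    using cong_sym cong_trans by blast
qed

text \<open>Shifting the product by one step of \<open>\<epsilon>\<close> multiplies every exponent by \<open>a \<equiv> t\<^sup>-\<^sup>1\<close>;
  the wrap-around term uses \<open>\<epsilon>\<^sup>s = id\<close> and \<open>a\<^sup>s\<^sup>-\<^sup>1 \<equiv> t\<close>.\<close>
lemma proj_eps_in_J_eps:
  assumes "x \<noteq> 0"
  shows "proj_eps x \<in> J_eps p \<epsilon> t"
proof -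
  obtain s' where s': "s = Suc s'"
    using s_pos gr0_implies_Suc by blast
  have "\<epsilon> (proj_eps x) = (\<Prod>k<s. (\<epsilon> ^^ Suc k) x powi (m * a ^ k))"
    by (simp add: proj_eps_def field_aut_prod[OF aut_\<epsilon>] field_aut_power_int[OF aut_\<epsilon>])
  also have "\<dots> = (\<Prod>k<s'. (\<epsilon> ^^ Suc k) x powi (m * a ^ k)) * x powi (m * a ^ s')"
    using \<epsilon>_order s' by (simp del: funpow.simps)
  finally have shifted: "\<epsilon> (proj_eps x) =
      (\<Prod>k<s'. (\<epsilon> ^^ Suc k) x powi (m * a ^ k)) * x powi (m * a ^ s')" .
  have powered: "proj_eps x powi t =
      x powi (m * t) * (\<Prod>k<s'. (\<epsilon> ^^ Suc k) x powi (m * a ^ Suc k * t))"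
    unfolding proj_eps_def power_int_prod unfolding s' prod.lessThan_Suc_shift
    by (simp del: funpow.simps flip: power_int_mult)
  have "pth_cong p (\<epsilon> (proj_eps x)) (proj_eps x powi t)"
    unfolding shifted powered mult.commute[of "x powi (m * t)"]
  proof (intro pth_cong_mult pth_cong_prod pth_cong_power_int_exponent)
    show "x \<noteq> 0" "(\<epsilon> ^^ Suc k) x \<noteq> 0" for k
      using assms field_aut_eq_0_iff[OF aut_\<epsilon>_funpow] by metis+
    show "[m * a ^ k = m * a ^ Suc k * t] (mod int p)" for k
      using cong_scalar_left[OF t_a_cong, of "m * a ^ k"] by (simp add: ac_simps cong_sym)
    show "[m * a ^ s' = m * t] (mod int p)"
      using a_power_cong s' by (simp add: cong_scalar_left)
  qed
  then show ?thesis
    using proj_eps_nonzero[OF assms] unfolding J_eps_def pth_cong_def by blast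
qed

subsection \<open>The complement \<open>J\<^sup>\<nu>\<close>\<close>

definition J_nu :: "'a set" where
  "J_nu = {x. x \<noteq> 0 \<and> pth_power p (proj_eps x)}"

lemma J_submodule_J_nu: "J_submodule p \<sigma> J_nu"
  unfolding J_submodule_def J_nu_def
  by (auto simp: proj_eps_mult proj_eps_inverse pth_power_mult pth_power_inverse
      field_aut_eq_0_iff[OF aut_\<sigma>] simp flip: \<sigma>_proj_eps
      intro: pth_power_field_aut[OF aut_\<sigma>] proj_eps_pth_power)

lemma J_eps_inter_J_nu: "x \<in> J_eps p \<epsilon> t \<Longrightarrow> x \<in> J_nu \<Longrightarrow> pth_power p x"
  unfolding J_nu_def by (blast intro: pth_cong_pth_power pth_cong_sym proj_eps_J_eps)

lemma J_eps_times_J_nu: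
  assumes "x \<noteq> 0"
  shows "\<exists>u \<in> J_eps p \<epsilon> t. \<exists>v \<in> J_nu. x = u * v"
proof -
  have "pth_cong p (proj_eps x) (proj_eps (proj_eps x))"
    using proj_eps_J_eps[OF proj_eps_in_J_eps[OF assms]] by (rule pth_cong_sym)
  then have "x / proj_eps x \<in> J_nu"
    using assms proj_eps_nonzero by (simp add: J_nu_def proj_eps_divide pth_cong_def)
  moreover have "x = proj_eps x * (x / proj_eps x)"
    using proj_eps_nonzero[OF assms] by simp
  ultimately show ?thesis
    using proj_eps_in_J_eps[OF assms] by blast
qed

lemma index_e_J_nu:
  assumes "x \<in> J_nu" "x \<in> J_ker p \<sigma> (p - 1)"
  shows "index_e p \<sigma> \<xi> x = 0"
proof -
  have x: "x \<noteq> 0" "pth_power p (proj_eps x)"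
    using assms(1) by (auto simp: J_nu_def)
  obtain c where c: "has_index x c"
    using has_index_exists assms(2) J_ker_iff by blast
  have "c = 0"
    using has_index_unique[OF proj_eps_nonzero[OF x(1)] has_index_proj_eps[OF c]]
      has_index_pth_power[OF x(2)] .
  then show ?thesis
    using index_e_eqI[OF x(1) c] by simp
qed

lemma J_eps_component_pth_cong:
  assumes "x \<noteq> 0" "u \<in> J_eps p \<epsilon> t" "v \<in> J_nu" "pth_power p (x / (u * v))"
  shows "pth_cong p u (proj_eps x)"
proof -
  have "u \<noteq> 0" "v \<noteq> 0" "pth_power p (proj_eps v)"
    using assms(2,3) by (auto simp: J_eps_def J_nu_def)
  then have "proj_eps u / proj_eps x = inverse (proj_eps v * proj_eps (x / (u * v)))"
    using proj_eps_nonzero assms(1) by (simp add: proj_eps_divide proj_eps_mult field_simps)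
  then have "pth_cong p (proj_eps u) (proj_eps x)"
    using assms(1,4) \<open>u \<noteq> 0\<close> \<open>pth_power p (proj_eps v)\<close>
    by (simp add: pth_cong_def proj_eps_nonzero pth_power_inverse pth_power_mult proj_eps_pth_power)
  then show ?thesis
    by (rule pth_cong_trans[OF pth_cong_sym[OF proj_eps_J_eps[OF assms(2)]]])
qed

lemma index_e_J_eps_component:
  assumes "x \<in> J_ker p \<sigma> (p - 1)" "u \<in> J_eps p \<epsilon> t" "v \<in> J_nu" "pth_power p (x / (u * v))"
  shows "u \<in> J_ker p \<sigma> (p - 1) \<and> index_e p \<sigma> \<xi> u = index_e p \<sigma> \<xi> x"
proof -
  have x: "x \<noteq> 0" "pth_power p (normKF p \<sigma> x)"
    using assms(1) J_ker_iff by auto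
  have u: "pth_cong p u (proj_eps x)"
    using J_eps_component_pth_cong[OF x(1) assms(2-4)] .
  have "pth_power p (normKF p \<sigma> u)"
    using normKF_pth_cong[OF u] x(2) by (simp add: normKF_proj_eps proj_eps_pth_power pth_cong_pth_power)
  moreover obtain c where c: "has_index x c"
    using has_index_exists x(2) by blast
  moreover have "has_index u c"
    using has_index_pth_cong[OF u has_index_proj_eps[OF c]] .
  ultimately show ?thesis
    using u index_e_eqI x(1) J_ker_iff by (auto simp: pth_cong_def)
qed

end

theorem lemma7:
  fixes p s :: nat and t :: int
    and \<sigma> \<epsilon> :: "'a::field \<Rightarrow> 'a" and \<xi> :: 'a
    and F0 F K0 :: "'a set"
  assumes p_prime: "prime (p::nat)" and p_odd: "odd p"
    and char: "(of_nat p :: 'a) \<noteq> 0"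
    and aut_\<sigma>: "field_aut \<sigma>" and aut_\<epsilon>: "field_aut \<epsilon>"
    and \<sigma>_order: "\<sigma> ^^ p = id" "\<sigma> \<noteq> id"
    and \<epsilon>_order: "s > 0" "\<epsilon> ^^ s = id" "\<forall>k. 0 < k \<and> k < s \<longrightarrow> \<epsilon> ^^ k \<noteq> id"
    and s_coprime: "coprime s p"
    and commute: "\<epsilon> \<circ> \<sigma> = \<sigma> \<circ> \<epsilon>"
    and F0_def: "F0 = {x. \<sigma> x = x \<and> \<epsilon> x = x}"
    and F_def: "F = {x. \<sigma> x = x}"
    and K0_def: "K0 = {x. \<epsilon> x = x}"
    and \<xi>_prim: "\<xi> ^ p = 1" "\<xi> \<noteq> 1"
    and F_gen: "F = gen_field (F0 \<union> {\<xi>})"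
    and K_gen: "gen_field (K0 \<union> {\<xi>}) = UNIV"
    and kummer: "\<exists>\<alpha>. gen_field (F \<union> {\<alpha>}) = UNIV \<and> \<alpha> ^ p \<in> F \<and> \<sigma> \<alpha> = \<xi> * \<alpha>"
    and t_def: "\<epsilon> \<xi> = \<xi> powi t"
  shows "\<exists>J\<nu>. J_submodule p \<sigma> J\<nu>
     \<and> (\<forall>x \<in> J_eps p \<epsilon> t \<inter> J\<nu>. pth_power p x)
     \<and> (\<forall>x. x \<noteq> 0 \<longrightarrow> (\<exists>u \<in> J_eps p \<epsilon> t. \<exists>v \<in> J\<nu>. x = u * v))
     \<and> (\<forall>x \<in> J\<nu> \<inter> J_ker p \<sigma> (p - 1). index_e p \<sigma> \<xi> x = 0)
     \<and> (\<forall>x \<in> J_ker p \<sigma> (p - 1). \<forall>u \<in> J_eps p \<epsilon> t. \<forall>v \<in> J\<nu>.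
          pth_power p (x / (u * v)) \<longrightarrow>
            u \<in> J_ker p \<sigma> (p - 1) \<and> index_e p \<sigma> \<xi> u = index_e p \<sigma> \<xi> x)"
proof -
  have "\<xi> \<in> gen_field (F0 \<union> {\<xi>})"
    by (auto simp: gen_field_def)
  then have \<sigma>_\<xi>: "\<sigma> \<xi> = \<xi>"
    using F_gen F_def by auto
  interpret kummer_setting p \<xi> \<sigma> \<epsilon> t s
    by unfold_locales (use p_prime p_odd aut_\<sigma> aut_\<epsilon> \<sigma>_order \<epsilon>_order commute \<xi>_prim \<sigma>_\<xi> t_def in auto)
  obtain m where "[int s * m = 1] (mod int p)"
    using s_coprime cong_solve_coprime_int[of "int s" "int p"] by auto
  then have m: "[m * int s = 1] (mod int p)"
    by (simp only: mult.commute)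
  have "t * t ^ (s - 1) = t ^ s"
    using s_pos by (cases s) simp_all
  then have "[t * t ^ (s - 1) = 1] (mod int p)"
    using t_power_s_cong by simp
  with m interpret eps_projection p \<xi> \<sigma> \<epsilon> t s m "t ^ (s - 1)"
    by unfold_locales
  show ?thesis
  proof (intro exI[of _ J_nu] conjI ballI allI impI)
    show "J_submodule p \<sigma> J_nu"
      by (rule J_submodule_J_nu)
    show "pth_power p x" if "x \<in> J_eps p \<epsilon> t \<inter> J_nu" for x
      using J_eps_inter_J_nu that by blast
    show "\<exists>u \<in> J_eps p \<epsilon> t. \<exists>v \<in> J_nu. x = u * v" if "x \<noteq> 0" for x
      using J_eps_times_J_nu that .
    show "index_e p \<sigma> \<xi> x = 0" if "x \<in> J_nu \<inter> J_ker p \<sigma> (p - 1)" for x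
      using index_e_J_nu that by blast
  qed (use index_e_J_eps_component in blast)+
qed

end
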